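(* Let $G=(V,E)$ be a graph and $P:=\{k\in V : \deg_G(k)=|V|-1\}$. Then (i) the set of vertices of $\{X\in\mathbb{S}^V_+ : \operatorname{tr}(X)=1,\ X_{ij}=0\ \forall ij\in E\}$ is $\{e_ke_k^{\mathsf T} : k\in P\}$; (ii) the set of vertices of $\{X\in\mathbb{S}^V_+ : \operatorname{tr}(X)=1,\ X_{ij}=0\ \forall ij\in E,\ X_{ij}\ge 0\ \forall ij\in\binom{V}{2}\setminus E\}$ is $\{e_ke_k^{\mathsf T} : k\in V\}$; (iii) the set of vertices of $\{X\in\mathbb{S}^V_+ : \operatorname{tr}(X)=1,\ X_{ij}\le 0\ \forall ij\in E\}$ is $\{e_ke_k^{\mathsf T} : k\in P\}$.
   Context: $\mathbb{S}^V_+$ denotes the real symmetric positive semidefinite matrices indexed by $V$, with trace inner product; $e_k$ are standard basis vectors of $\mathbb{R}^V$. For a convex set $\mathcal{C}$ in a finite-dimensional space $\mathbb{E}$ and $\bar x\in\mathcal{C}$, the normal cone is $N_{\mathcal{C}}(\bar x):=\{c : \langle c,x\rangle\le\langle c,\bar x\rangle\ \forall x\in\mathcal{C}\}$; $\bar x$ is a vertex if $\dim N_{\mathcal{C}}(\bar x)=\dim\mathbb{E}$ (here $\mathbb{E}=\mathbb{S}^V$). *)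

theory Defs
  imports "HOL-Analysis.Analysis"
begin

definition sym_mats :: "(real^'v^'v) set" where
  "sym_mats = {X. transpose X = X}"

definition psd :: "real^'v^'v \<Rightarrow> bool" where
  "psd X \<longleftrightarrow> transpose X = X \<and> (\<forall>x. 0 \<le> x \<bullet> (X *v x))"

definition tr_inner :: "real^'v^'v \<Rightarrow> real^'v^'v \<Rightarrow> real" where
  "tr_inner C X = trace (C ** X)"

definition normal_cone :: "(real^'v^'v) set \<Rightarrow> real^'v^'v \<Rightarrow> (real^'v^'v) set" where
  "normal_cone C Xb = {Cm \<in> sym_mats. \<forall>X\<in>C. tr_inner Cm X \<le> tr_inner Cm Xb}"

definition is_vertex :: "(real^'v^'v) set \<Rightarrow> real^'v^'v \<Rightarrow> bool" where
  "is_vertex C Xb \<longleftrightarrow> Xb \<in> C \<and> aff_dim (normal_cone C Xb) = aff_dim (sym_mats :: (real^'v^'v) set)"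

definition vertices :: "(real^'v^'v) set \<Rightarrow> (real^'v^'v) set" where
  "vertices C = {X. is_vertex C X}"

definition unit_proj :: "'v \<Rightarrow> real^'v^'v" where
  "unit_proj k = (\<chi> i j. if i = k \<and> j = k then 1 else 0)"

text \<open>Simple graph on vertex set UNIV::'v set, edges are 2-element subsets.\<close>
definition simple_graph :: "'v set set \<Rightarrow> bool" where
  "simple_graph E \<longleftrightarrow> (\<forall>e\<in>E. \<exists>i j. i \<noteq> j \<and> e = {i, j})"

definition degree :: "'v set set \<Rightarrow> 'v \<Rightarrow> nat" where
  "degree E k = card {j. {k, j} \<in> E}"

end

theory Submission
  imports Defs
begin

text \<open>
  All three sets are of the form S = {X. psd X, trace X = 1, Q X} with a sign pattern Q that is
  invariant under positive entrywise scaling. A vertex X of S cannot have a diagonal entry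
  x = X_ii with 0 < x < 1: scaling row and column i by 1 + t and renormalising the trace gives a
  curve in S through X, and first-order optimality at t = 0 makes every normal vector orthogonal
  to a fixed matrix W with <e_i e_i^T, W> = 2x(1 - x) \<noteq> 0, so the normal cone lies in a hyperplane.
  A psd matrix of trace 1 whose diagonal entries all lie outside (0, 1) is some e_k e_k^T.
  The same argument along the rank-one curve (e_k + t e_j)(e_k + t e_j)^T, which is feasible in
  (i) and (iii) when kj is not an edge, shows that e_k e_k^T is not a vertex when k is not
  adjacent to all other vertices. Conversely, if every feasible Y has all Y_kj (j \<noteq> k) of one
  sign, then e_k e_k^T maximises <C, _> over S for every symmetric C close to (2|V| + 1) e_k e_k^T
  plus that sign on the rest of row and column k, so the normal cone has nonempty interior.
\<close>

lemma inner_matrix_eq_sum: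
  "(C :: real^'n^'m) \<bullet> W = (\<Sum>a\<in>UNIV. \<Sum>b\<in>UNIV. C$a$b * W$a$b)"
  by (simp add: inner_vec_def)

lemma quadratic_form_eq_sum:
  "x \<bullet> (Y *v x) = (\<Sum>a\<in>UNIV. \<Sum>b\<in>UNIV. x$a * Y$a$b * x$b)"
  by (simp add: inner_vec_def matrix_vector_mult_def sum_distrib_left mult_ac)

lemma matrix_vector_mult_axis: "(Y :: real^'n^'m) *v axis b q = (\<chi> a. Y$a$b * q)"
  by (simp add: matrix_vector_mult_def axis_def vec_eq_iff if_distrib cong: if_cong)

lemma quadratic_form_two_axes:
  fixes Y :: "real^'n^'n"
  shows "(axis a p + axis b q) \<bullet> (Y *v (axis a p + axis b q))
         = p*p*Y$a$a + p*q*(Y$a$b + Y$b$a) + q*q*Y$b$b"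
  by (simp add: matrix_vector_right_distrib inner_add_left inner_add_right inner_axis' matrix_vector_mult_axis algebra_simps)

lemma tr_inner_eq_inner_transpose: "tr_inner C X = C \<bullet> transpose X"
  by (simp add: tr_inner_def trace_def matrix_matrix_mult_def inner_matrix_eq_sum transpose_def)

lemma tr_inner_symmetric: "transpose X = X \<Longrightarrow> tr_inner C X = C \<bullet> X"
  by (simp add: tr_inner_eq_inner_transpose)

lemma abs_entry_le_norm: "\<bar>(M :: real^'n^'m)$a$b\<bar> \<le> norm M"
  by (rule order_trans[OF component_le_norm_cart Finite_Cartesian_Product.norm_nth_le])

lemma subspace_sym_mats: "subspace (sym_mats :: (real^'n^'n) set)"
  unfolding subspace_def sym_mats_def by (auto simp: transpose_def vec_eq_iff)

lemma sym_mats_entry: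
  assumes "C \<in> sym_mats"
  shows "C$b$a = C$a$b"
proof -
  have "transpose C $ a $ b = C $ a $ b"
    using assms by (simp add: sym_mats_def)
  then show ?thesis
    by (simp add: transpose_def)
qed

lemma trace_scaleR: "trace (c *\<^sub>R X) = c * trace (X :: real^'n^'n)"
  by (simp add: trace_def sum_distrib_left)

lemma sum_UNIV_remove:
  fixes f :: "'a::finite \<Rightarrow> real"
  shows "(\<Sum>a\<in>UNIV. if a = k then 0 else f a) = sum f UNIV - f k"
  by (simp add: sum.If_cases sum_diff1 Compl_eq_Diff_UNIV)

lemma psd_symmetric_entry: "psd X \<Longrightarrow> X$b$a = X$a$b"
  unfolding psd_def by (metis transpose_def vec_lambda_beta)

lemma psd_two_axes_nonneg:
  assumes "psd Y"
  shows "0 \<le> p*p*Y$a$a + p*q*(Y$a$b + Y$b$a) + q*q*Y$b$b"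
  using assms quadratic_form_two_axes[of a p b q Y] unfolding psd_def by metis

lemma psd_diag_nonneg: "psd Y \<Longrightarrow> 0 \<le> Y$a$a"
  using psd_two_axes_nonneg[of Y 1 a 0] by simp

lemma psd_abs_entry_le:
  assumes "psd Y"
  shows "\<bar>Y$a$b\<bar> \<le> Y$a$a + Y$b$b"
  using psd_two_axes_nonneg[OF assms, of 1 a 1 b] psd_two_axes_nonneg[OF assms, of 1 a "-1" b]
    psd_symmetric_entry[OF assms, of a b] by simp

lemma psd_entry_eq_0_if_diag_eq_0:
  assumes "psd Y" "Y$a$a = 0"
  shows "Y$a$b = 0"
proof (rule ccontr)
  assume "Y$a$b \<noteq> 0"
  define l where "l = - (Y$b$b + 1) / (2 * Y$a$b)"
  have "0 \<le> l*l*Y$a$a + l*(Y$a$b + Y$b$a) + Y$b$b"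
    using psd_two_axes_nonneg[OF assms(1), of l a 1 b] by simp
  also have "\<dots> = -1"
    using \<open>Y$a$b \<noteq> 0\<close> assms(2) psd_symmetric_entry[OF assms(1), of a b] by (simp add: l_def field_simps)
  finally show False by simp
qed

lemma psd_trace_one_diag_le_1:
  assumes "psd Y" "trace Y = 1"
  shows "Y$k$k \<le> 1"
proof -
  have "0 \<le> (\<Sum>a\<in>UNIV. if a = k then 0 else Y$a$a)"
    using psd_diag_nonneg[OF assms(1)] by (intro sum_nonneg) simp
  with assms(2) show ?thesis
    by (simp add: sum_UNIV_remove trace_def)
qed

lemma psd_scaleR:
  assumes "psd X" "0 \<le> c"
  shows "psd (c *\<^sub>R X)"
proof -
  have "x \<bullet> ((c *\<^sub>R X) *v x) = c * (x \<bullet> (X *v x))" for x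
    unfolding quadratic_form_eq_sum by (simp add: sum_distrib_left mult_ac)
  with assms show ?thesis
    by (simp add: psd_def transpose_scalar)
qed

definition outer :: "real^'m \<Rightarrow> real^'n \<Rightarrow> real^'n^'m" where
  "outer v w = (\<chi> a b. v$a * w$b)"

lemma inner_outer: "C \<bullet> outer v w = v \<bullet> (C *v w)"
  by (simp add: inner_matrix_eq_sum quadratic_form_eq_sum outer_def inner_vec_def matrix_vector_mult_def
      sum_distrib_left mult_ac)

lemma transpose_outer: "transpose (outer v w) = outer w v"
  by (simp add: transpose_def outer_def vec_eq_iff mult.commute)

lemma trace_outer: "trace (outer v w) = v \<bullet> w"
  by (simp add: trace_def outer_def inner_vec_def)

lemma psd_outer: "psd (outer v v)"
proof -
  have "x \<bullet> (outer v v *v x) = (x \<bullet> v) * (x \<bullet> v)" for x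
    unfolding quadratic_form_eq_sum unfolding inner_vec_def sum_product by (simp add: outer_def mult_ac)
  then show ?thesis
    by (simp add: psd_def transpose_outer)
qed

lemma inner_outer_axis: "C \<bullet> outer (axis k 1) (axis j 1) = C$k$j"
  by (simp add: inner_outer inner_axis' matrix_vector_mult_axis)

definition diag_congruence :: "('n \<Rightarrow> real) \<Rightarrow> real^'n^'n \<Rightarrow> real^'n^'n" where
  "diag_congruence s X = (\<chi> a b. s a * X$a$b * s b)"

lemma psd_diag_congruence:
  fixes X :: "real^'n^'n"
  assumes X: "psd X"
  shows "psd (diag_congruence s X)"
  unfolding psd_def
proof (intro conjI allI)
  have "X$b$a = X$a$b" for a b
    using psd_symmetric_entry[OF X] .
  then show "transpose (diag_congruence s X) = diag_congruence s X"
    by (simp add: diag_congruence_def transpose_def vec_eq_iff mult.commute)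
  fix x :: "real^'n"
  have "x \<bullet> (diag_congruence s X *v x) = (\<chi> a. s a * x$a) \<bullet> (X *v (\<chi> a. s a * x$a))"
    unfolding quadratic_form_eq_sum by (simp add: diag_congruence_def mult_ac)
  also have "\<dots> \<ge> 0"
    using X unfolding psd_def by blast
  finally show "0 \<le> x \<bullet> (diag_congruence s X *v x)" .
qed

lemma unit_proj_eq_outer: "unit_proj k = outer (axis k 1) (axis k 1)"
  by (simp add: unit_proj_def outer_def axis_def vec_eq_iff)

lemma psd_unit_proj: "psd (unit_proj k)"
  by (simp add: unit_proj_eq_outer psd_outer)

lemma trace_unit_proj: "trace (unit_proj k) = 1"
  by (simp add: unit_proj_eq_outer trace_outer inner_axis_axis)

lemma inner_unit_proj: "C \<bullet> unit_proj k = C$k$k"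
  by (simp add: unit_proj_eq_outer inner_outer_axis)

lemma tr_inner_unit_proj: "tr_inner C (unit_proj k) = C$k$k"
  using psd_unit_proj[of k] by (simp add: psd_def tr_inner_symmetric inner_unit_proj)

lemma unit_proj_nonneg: "0 \<le> unit_proj k $ a $ b"
  by (simp add: unit_proj_def)

lemma psd_trace_one_eq_unit_proj:
  fixes X :: "real^'n^'n"
  assumes X: "psd X" "trace X = 1" and integral: "\<And>i. X$i$i \<le> 0 \<or> 1 \<le> X$i$i"
  shows "\<exists>k. X = unit_proj k"
proof -
  have diag_sum: "(\<Sum>a\<in>UNIV. X$a$a) = 1"
    using X(2) by (simp add: trace_def)
  have "\<exists>k. 0 < X$k$k"
  proof (rule ccontr)
    assume "\<nexists>k. 0 < X$k$k"
    then have "(\<Sum>a\<in>UNIV. X$a$a) \<le> 0"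
      by (intro sum_nonpos) (simp add: not_less)
    with diag_sum show False
      by simp
  qed
  then obtain k where "0 < X$k$k" ..
  then have "X$k$k = 1"
    using integral[of k] psd_trace_one_diag_le_1[OF X, of k] by simp
  then have "(\<Sum>a\<in>UNIV. if a = k then 0 else X$a$a) = 0"
    using diag_sum by (simp add: sum_UNIV_remove)
  then have diag0: "X$a$a = 0" if "a \<noteq> k" for a
    using that psd_diag_nonneg[OF X(1)] sum_nonneg_eq_0_iff[of UNIV "\<lambda>a. if a = k then 0 else X$a$a"]
    by (auto dest: spec[of _ a])
  have "X$a$b = unit_proj k $a$b" for a b
  proof (cases "a = k \<and> b = k")
    case True
    with \<open>X$k$k = 1\<close> show ?thesis
      by (simp add: unit_proj_def)
  next
    case False
    then have "X$a$b = 0 \<or> X$b$a = 0"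
      using psd_entry_eq_0_if_diag_eq_0[OF X(1) diag0] by blast
    with False show ?thesis
      using psd_symmetric_entry[OF X(1), of a b] by (auto simp: unit_proj_def)
  qed
  then show ?thesis
    by (auto simp: vec_eq_iff)
qed

lemma normal_coneD:
  "C \<in> normal_cone S X \<Longrightarrow> Y \<in> S \<Longrightarrow> tr_inner C Y \<le> tr_inner C X"
  by (simp add: normal_cone_def)

lemma is_vertex_if_ball_in_normal_cone:
  fixes S :: "(real^'n^'n) set"
  assumes "X \<in> S" "C0 \<in> sym_mats" "0 < r" and ball: "sym_mats \<inter> ball C0 r \<subseteq> normal_cone S X"
  shows "is_vertex S X"
proof -
  have "aff_dim (sym_mats \<inter> ball C0 r) = aff_dim (sym_mats :: (real^'n^'n) set)"
    by (rule aff_dim_convex_Int_open) (use assms(2,3) subspace_sym_mats subspace_imp_convex in auto)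
  moreover have "aff_dim (sym_mats \<inter> ball C0 r) \<le> aff_dim (normal_cone S X)"
    using ball by (rule aff_dim_subset)
  moreover have "aff_dim (normal_cone S X) \<le> aff_dim (sym_mats :: (real^'n^'n) set)"
    by (rule aff_dim_subset) (auto simp: normal_cone_def)
  ultimately show ?thesis
    using assms(1) unfolding is_vertex_def by linarith
qed

lemma not_vertex_if_normal_cone_orthogonal:
  fixes S :: "(real^'n^'n) set"
  assumes orth: "\<And>C. C \<in> normal_cone S X \<Longrightarrow> C \<bullet> W = 0"
    and "V \<in> sym_mats" "V \<bullet> W \<noteq> 0"
  shows "\<not> is_vertex S X"
proof -
  let ?H = "sym_mats \<inter> {C. W \<bullet> C = 0}"
  have H: "subspace ?H"
    by (intro subspace_inter subspace_sym_mats subspace_hyperplane)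
  have "V \<notin> ?H"
    using assms(3) by (simp add: inner_commute)
  with assms(2) have "?H \<subset> sym_mats"
    by blast
  then have "span ?H \<subset> span (sym_mats :: (real^'n^'n) set)"
    by (simp only: span_eq_iff[THEN iffD2, OF H] span_eq_iff[THEN iffD2, OF subspace_sym_mats])
  then have "dim ?H < dim (sym_mats :: (real^'n^'n) set)"
    by (rule dim_psubset)
  moreover have "aff_dim (normal_cone S X) \<le> aff_dim ?H"
    using orth by (intro aff_dim_subset) (auto simp: normal_cone_def inner_commute)
  ultimately have "aff_dim (normal_cone S X) < aff_dim (sym_mats :: (real^'n^'n) set)"
    using aff_dim_subspace[OF H] aff_dim_subspace[OF subspace_sym_mats[where 'n='n]]
    by simp
  then show ?thesis
    by (simp add: is_vertex_def)
qed

section \<open>First-order optimality along a curve\<close>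

lemma nonpos_if_quadratic_nonpos_at_right:
  fixes b c d :: real
  assumes "0 < d" and nonpos: "\<And>t. 0 < t \<Longrightarrow> t < d \<Longrightarrow> t*b + t\<^sup>2*c \<le> 0"
  shows "b \<le> 0"
proof -
  have "((\<lambda>t. b + t*c) \<longlongrightarrow> b) (at_right 0)"
    by (auto intro!: tendsto_eq_intros)
  moreover have "eventually (\<lambda>t. b + t*c \<le> 0) (at_right 0)"
    using eventually_at_right_real[OF assms(1)]
  proof (rule eventually_mono)
    fix t assume t: "t \<in> {0<..<d}"
    then have "t * (b + t*c) \<le> 0"
      using nonpos[of t] by (simp add: power2_eq_square algebra_simps)
    with t show "b + t*c \<le> 0"
      by (simp add: mult_le_0_iff)
  qed
  ultimately show ?thesis
    by (rule tendsto_upperbound) simp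
qed

lemma linear_coeff_eq_0_if_quadratic_nonpos:
  fixes b c d :: real
  assumes "0 < d" and nonpos: "\<And>t. \<bar>t\<bar> < d \<Longrightarrow> t*b + t\<^sup>2*c \<le> 0"
  shows "b = 0"
proof -
  have "b \<le> 0"
    using assms(1) by (rule nonpos_if_quadratic_nonpos_at_right[where c = c]) (use nonpos in auto)
  moreover have "-b \<le> 0"
    using assms(1) by (rule nonpos_if_quadratic_nonpos_at_right[where c = c]) (use nonpos[of "-_"] in auto)
  ultimately show ?thesis
    by simp
qed

section \<open>Projections with a sign-constrained row are vertices\<close>

lemma mult_nonpos_if_near_sign:
  fixes s c y :: real
  assumes "\<bar>s\<bar> = 1" "s * y \<le> 0" "\<bar>c - s\<bar> < 1"
  shows "c * y \<le> 0"
proof -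
  have "s * y = - \<bar>y\<bar>"
    using assms(1,2) abs_mult[of s y] abs_of_nonpos[of "s * y"] by simp
  moreover have "(c - s) * y \<le> \<bar>y\<bar>"
    using assms(3) abs_mult[of "c - s" y] abs_ge_self[of "(c - s) * y"]
      mult_right_mono[of "\<bar>c - s\<bar>" 1 "\<bar>y\<bar>"] by linarith
  ultimately show ?thesis
    by (simp add: algebra_simps)
qed

lemma sum_corner_plus_off_diag:
  fixes Y :: "real^'n^'n"
  assumes "trace Y = 1"
  shows "(\<Sum>a\<in>UNIV. \<Sum>b\<in>UNIV. (if a = k then if b = k then c else 0 else 0)
           + (if a = k then 0 else Y$a$a) + (if b = k then 0 else Y$b$b))
         = c + 2 * CARD('n) * (1 - Y$k$k)"
proof -
  have off_diag: "(\<Sum>a\<in>UNIV. if a = k then 0 else Y$a$a) = 1 - Y$k$k"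
    using assms by (simp add: sum_UNIV_remove trace_def)
  have corner: "(\<Sum>b\<in>UNIV. if a = k then if b = k then c else 0 else 0) = (if a = k then c else 0)" for a
    by auto
  show ?thesis
    by (simp add: sum.distrib corner off_diag flip: sum_distrib_left)
qed

lemma inner_psd_le_diag_entry:
  fixes C Y :: "real^'n^'n"
  assumes Y: "psd Y" "trace Y = 1"
    and row: "\<And>j. j \<noteq> k \<Longrightarrow> C$k$j * Y$k$j \<le> 0"
    and col: "\<And>j. j \<noteq> k \<Longrightarrow> C$j$k * Y$j$k \<le> 0"
    and off: "\<And>a b. a \<noteq> k \<Longrightarrow> b \<noteq> k \<Longrightarrow> \<bar>C$a$b\<bar> \<le> 1"
    and big: "2 * CARD('n) \<le> C$k$k"
  shows "C \<bullet> Y \<le> C$k$k"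
proof -
  have entry: "C$a$b * Y$a$b \<le> (if a = k then if b = k then C$k$k * Y$k$k else 0 else 0)
                 + (if a = k then 0 else Y$a$a) + (if b = k then 0 else Y$b$b)" for a b
  proof (cases "a = k \<or> b = k")
    case True
    then show ?thesis
      using row[of b] col[of a] psd_diag_nonneg[OF Y(1), of a] psd_diag_nonneg[OF Y(1), of b] by auto
  next
    case False
    have "C$a$b * Y$a$b \<le> \<bar>C$a$b\<bar> * \<bar>Y$a$b\<bar>"
      by (metis abs_ge_self abs_mult)
    also have "\<dots> \<le> \<bar>Y$a$b\<bar>"
      using off False by (simp add: mult_left_le_one_le)
    also have "\<dots> \<le> Y$a$a + Y$b$b"
      using Y(1) by (rule psd_abs_entry_le)
    finally show ?thesis
      using False by simp
  qed
  have "C \<bullet> Y \<le> C$k$k * Y$k$k + 2 * CARD('n) * (1 - Y$k$k)"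
    unfolding inner_matrix_eq_sum sum_corner_plus_off_diag[OF Y(2), symmetric] by (intro sum_mono entry)
  also have "\<dots> \<le> C$k$k"
  proof -
    have "0 \<le> (C$k$k - 2 * CARD('n)) * (1 - Y$k$k)"
      using big psd_trace_one_diag_le_1[OF Y] by simp
    then show ?thesis
      by (simp add: algebra_simps)
  qed
  finally show ?thesis .
qed

lemma is_vertex_unit_proj:
  fixes S :: "(real^'n^'n) set"
  assumes "unit_proj k \<in> S" and S: "S \<subseteq> {Y. psd Y \<and> trace Y = 1}"
    and s: "\<bar>s\<bar> = 1" and sign: "\<And>Y j. Y \<in> S \<Longrightarrow> j \<noteq> k \<Longrightarrow> s * Y$k$j \<le> 0"
  shows "is_vertex S (unit_proj k)"
proof (rule is_vertex_if_ball_in_normal_cone)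
  \<comment> \<open>Every symmetric C within distance 1 of C0 meets the hypotheses of inner_psd_le_diag_entry.\<close>
  define C0 :: "real^'n^'n" where
    "C0 = (\<chi> a b. if a = k \<and> b = k then 2 * CARD('n) + 1 else if a = k \<or> b = k then s else 0)"
  show "C0 \<in> sym_mats"
    by (auto simp: C0_def sym_mats_def transpose_def vec_eq_iff)
  show "sym_mats \<inter> ball C0 1 \<subseteq> normal_cone S (unit_proj k)"
  proof
    fix C assume "C \<in> sym_mats \<inter> ball C0 1"
    then have C: "C \<in> sym_mats" and near: "\<And>a b. \<bar>C$a$b - C0$a$b\<bar> < 1"
      using abs_entry_le_norm[of "C - C0"] by (auto simp: dist_norm norm_minus_commute intro: le_less_trans)
    have "C \<bullet> Y \<le> C$k$k" if "Y \<in> S" for Y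
    proof (rule inner_psd_le_diag_entry)
      show Y: "psd Y" "trace Y = 1"
        using that S by auto
      show row: "C$k$j * Y$k$j \<le> 0" if "j \<noteq> k" for j
        using near[of k j] that
        by (intro mult_nonpos_if_near_sign[OF s sign[OF \<open>Y \<in> S\<close> that]]) (simp add: C0_def)
      show "C$j$k * Y$j$k \<le> 0" if "j \<noteq> k" for j
        using row[OF that] psd_symmetric_entry[OF Y(1), of k j] sym_mats_entry[OF C, of k j]
        by simp
      show "\<bar>C$a$b\<bar> \<le> 1" if "a \<noteq> k" "b \<noteq> k" for a b
        using near[of a b] that by (simp add: C0_def)
      show "2 * CARD('n) \<le> C$k$k"
        using near[of k k] by (simp add: C0_def)
    qed
    with C S show "C \<in> normal_cone S (unit_proj k)"
      by (auto simp: normal_cone_def tr_inner_unit_proj tr_inner_symmetric psd_def)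
  qed
qed (use assms(1) in simp_all)

section \<open>Non-vertices\<close>

definition supported_on_pair :: "'n \<Rightarrow> 'n \<Rightarrow> real^'n^'n \<Rightarrow> bool" where
  "supported_on_pair k j Y \<longleftrightarrow> (\<forall>a b. Y$a$b \<noteq> 0 \<longrightarrow> a = b \<or> {a, b} = {k, j})"

lemma normalized_pair_outer:
  fixes k j :: "'n::finite" and t :: real
  assumes "k \<noteq> j"
  defines "Y \<equiv> (1 / (1 + t\<^sup>2)) *\<^sub>R outer (axis k 1 + axis j t) (axis k 1 + axis j t)"
  shows "psd Y" "trace Y = 1" "supported_on_pair k j Y"
    and "C \<in> sym_mats \<Longrightarrow> C \<bullet> Y = (C$k$k + t * (2 * C$k$j) + t\<^sup>2 * C$j$j) / (1 + t\<^sup>2)"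
proof -
  have "(axis k 1 + axis j t) \<bullet> (axis k 1 + axis j t) = 1 + t\<^sup>2"
    using assms(1) by (simp add: inner_add_left inner_add_right inner_axis_axis power2_eq_square)
  moreover have "0 < 1 + t\<^sup>2"
    by (intro add_pos_nonneg) simp_all
  ultimately show "psd Y" "trace Y = 1"
    by (simp_all add: Y_def psd_scaleR psd_outer trace_scaleR trace_outer)
  show "supported_on_pair k j Y"
    by (auto simp: supported_on_pair_def Y_def outer_def axis_def)
  show "C \<bullet> Y = (C$k$k + t * (2 * C$k$j) + t\<^sup>2 * C$j$j) / (1 + t\<^sup>2)" if "C \<in> sym_mats"
    using sym_mats_entry[OF that, of k j]
    by (simp add: Y_def inner_outer quadratic_form_two_axes power2_eq_square)
qed

lemma unit_proj_not_vertex_if_pair_feasible: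
  fixes S :: "(real^'n^'n) set"
  assumes "k \<noteq> j"
    and feasible: "\<And>Y. psd Y \<Longrightarrow> trace Y = 1 \<Longrightarrow> supported_on_pair k j Y \<Longrightarrow> Y \<in> S"
  shows "\<not> is_vertex S (unit_proj k)"
proof -
  define W :: "real^'n^'n" where "W = outer (axis k 1) (axis j 1)"
  define V where "V = W + transpose W"
  have "C \<bullet> W = 0" if C: "C \<in> normal_cone S (unit_proj k)" for C
  proof -
    have "t * (2 * C$k$j) + t\<^sup>2 * (C$j$j - C$k$k) \<le> 0" if "\<bar>t\<bar> < 1" for t
    proof -
      define Y where "Y = (1 / (1 + t\<^sup>2)) *\<^sub>R outer (axis k 1 + axis j t) (axis k 1 + axis j t)"
      note Y = normalized_pair_outer[OF assms(1), where t = t, folded Y_def]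
      have "C \<in> sym_mats"
        using C by (simp add: normal_cone_def)
      have "tr_inner C Y \<le> C$k$k"
        using normal_coneD[OF C feasible[OF Y(1-3)]] by (simp add: tr_inner_unit_proj)
      then have "(C$k$k + t * (2 * C$k$j) + t\<^sup>2 * C$j$j) / (1 + t\<^sup>2) \<le> C$k$k"
        using Y(1) Y(4)[OF \<open>C \<in> sym_mats\<close>] by (simp add: psd_def tr_inner_symmetric)
      moreover have "0 < 1 + t\<^sup>2"
        by (intro add_pos_nonneg) simp_all
      ultimately show ?thesis
        by (simp add: divide_le_eq algebra_simps)
    qed
    then have "2 * C$k$j = 0"
      by (rule linear_coeff_eq_0_if_quadratic_nonpos[OF zero_less_one])
    then show ?thesis
      by (simp add: W_def inner_outer_axis)
  qed
  moreover have "V \<in> sym_mats"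
    by (simp add: V_def sym_mats_def transpose_def vec_eq_iff add.commute)
  moreover have "V \<bullet> W \<noteq> 0"
  proof -
    have "V \<bullet> W = V$k$j"
      unfolding W_def by (rule inner_outer_axis)
    with assms(1) show ?thesis
      by (simp add: V_def W_def transpose_def outer_def axis_def)
  qed
  ultimately show ?thesis
    by (rule not_vertex_if_normal_cone_orthogonal)
qed

text \<open>The derivative at t = 0 of the congruence of X by diag(1, ..., 1 + t, ..., 1), with 1 + t at i.\<close>
definition row_col :: "'n \<Rightarrow> real^'n^'n \<Rightarrow> real^'n^'n" where
  "row_col i X = (\<chi> a b. (if a = i then X$a$b else 0) + (if b = i then X$a$b else 0))"

lemma diag_congruence_scale_one:
  "diag_congruence (\<lambda>a. if a = i then 1 + t else 1) X
     = X + t *\<^sub>R row_col i X + (t\<^sup>2 * X$i$i) *\<^sub>R unit_proj i"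
  by (simp add: vec_eq_iff diag_congruence_def row_col_def unit_proj_def power2_eq_square algebra_simps)

lemma trace_diag_congruence_scale_one:
  assumes "trace X = 1"
  shows "trace (diag_congruence (\<lambda>a. if a = i then 1 + t else 1) X) = 1 + (2 * t + t\<^sup>2) * X$i$i"
proof -
  have "trace (row_col i X) = 2 * X$i$i"
    by (simp add: trace_def row_col_def sum.distrib flip: sum_distrib_left)
  with assms show ?thesis
    by (simp add: diag_congruence_scale_one trace_add trace_scaleR trace_unit_proj algebra_simps)
qed

lemma normal_cone_diag_scaling_le:
  fixes S :: "(real^'n^'n) set"
  assumes X: "psd X" "trace X = 1" and i: "0 < X$i$i" "X$i$i < 1"
    and rescaled: "\<And>s c. (\<forall>a. 0 < s a) \<Longrightarrow> 0 < c \<Longrightarrow>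
      trace (c *\<^sub>R diag_congruence s X) = 1 \<Longrightarrow> c *\<^sub>R diag_congruence s X \<in> S"
    and C: "C \<in> normal_cone S X" and t: "\<bar>t\<bar> < 1"
  shows "C \<bullet> X + t * (C \<bullet> row_col i X) + t\<^sup>2 * X$i$i * C$i$i
         \<le> (C \<bullet> X) * (1 + (2 * t + t\<^sup>2) * X$i$i)"
proof -
  define s :: "'n \<Rightarrow> real" where "s = (\<lambda>a. if a = i then 1 + t else 1)"
  define q where "q = 1 + (2 * t + t\<^sup>2) * X$i$i"
  have "0 < q"
  proof -
    have "q = (1 - X$i$i) + X$i$i * (1 + t)\<^sup>2"
      by (simp add: q_def power2_eq_square algebra_simps)
    with i show ?thesis
      by (simp add: add_pos_nonneg)
  qed
  moreover have "trace (diag_congruence s X) = q"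
    using trace_diag_congruence_scale_one[OF X(2)] by (simp add: s_def q_def)
  moreover have "\<forall>a. 0 < s a"
    using t by (simp add: s_def)
  ultimately have "(1 / q) *\<^sub>R diag_congruence s X \<in> S"
    by (intro rescaled) (simp_all add: trace_scaleR)
  then have "tr_inner C ((1 / q) *\<^sub>R diag_congruence s X) \<le> tr_inner C X"
    by (rule normal_coneD[OF C])
  moreover have "tr_inner C ((1 / q) *\<^sub>R diag_congruence s X) = (C \<bullet> diag_congruence s X) / q"
    using psd_diag_congruence[OF X(1), of s] by (simp add: psd_def tr_inner_symmetric transpose_scalar)
  moreover have "C \<bullet> diag_congruence s X = C \<bullet> X + t * (C \<bullet> row_col i X) + t\<^sup>2 * X$i$i * C$i$i"
    by (simp add: s_def diag_congruence_scale_one inner_add_right inner_unit_proj)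
  ultimately show ?thesis
    using X(1) \<open>0 < q\<close> by (simp add: psd_def tr_inner_symmetric divide_le_eq q_def)
qed

lemma not_vertex_if_diag_entry_strictly_between:
  fixes S :: "(real^'n^'n) set"
  assumes X: "psd X" "trace X = 1" and i: "0 < X$i$i" "X$i$i < 1"
    and rescaled: "\<And>s c. (\<forall>a. 0 < s a) \<Longrightarrow> 0 < c \<Longrightarrow>
      trace (c *\<^sub>R diag_congruence s X) = 1 \<Longrightarrow> c *\<^sub>R diag_congruence s X \<in> S"
  shows "\<not> is_vertex S X"
proof -
  define x where "x = X$i$i"
  define W where "W = row_col i X - (2 * x) *\<^sub>R X"
  have "C \<bullet> W = 0" if C: "C \<in> normal_cone S X" for C
  proof -
    define T where "T = C \<bullet> X"
    define L where "L = C \<bullet> row_col i X"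
    have "t * (L - 2 * x * T) + t\<^sup>2 * (x * C$i$i - x * T) \<le> 0" if "\<bar>t\<bar> < 1" for t
    proof -
      have "T + t * L + t\<^sup>2 * x * C$i$i \<le> T * (1 + (2 * t + t\<^sup>2) * x)"
        using normal_cone_diag_scaling_le[OF X i rescaled C that] unfolding T_def L_def x_def .
      then show ?thesis
        by (simp add: algebra_simps)
    qed
    then have "L - 2 * x * T = 0"
      by (rule linear_coeff_eq_0_if_quadratic_nonpos[OF zero_less_one])
    then show ?thesis
      by (simp add: W_def T_def L_def inner_diff_right)
  qed
  moreover have "unit_proj i \<in> sym_mats"
    using psd_unit_proj[of i] by (simp add: psd_def sym_mats_def)
  moreover have "unit_proj i \<bullet> W \<noteq> 0"
  proof -
    have "unit_proj i \<bullet> W = W$i$i"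
      by (simp add: inner_commute[of "unit_proj i"] inner_unit_proj)
    also have "\<dots> = 2 * x * (1 - x)"
      by (simp add: W_def row_col_def x_def algebra_simps)
    finally show ?thesis
      using i by (simp add: x_def)
  qed
  ultimately show ?thesis
    by (rule not_vertex_if_normal_cone_orthogonal)
qed

lemma vertices_eq_unit_proj_image:
  fixes Q :: "real^'n^'n \<Rightarrow> bool"
  assumes S: "S = {X. psd X \<and> trace X = 1 \<and> Q X}"
    and scaling: "\<And>X r. Q X \<Longrightarrow> (\<forall>a b. 0 < r a b) \<Longrightarrow> Q (\<chi> a b. r a b * X$a$b)"
    and vertex: "\<And>k. k \<in> R \<Longrightarrow> is_vertex S (unit_proj k)"
    and not_vertex: "\<And>k. k \<notin> R \<Longrightarrow> \<not> is_vertex S (unit_proj k)"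
  shows "vertices S = unit_proj ` R"
proof
  show "unit_proj ` R \<subseteq> vertices S"
    using vertex by (auto simp: vertices_def)
  show "vertices S \<subseteq> unit_proj ` R"
  proof
    fix X assume "X \<in> vertices S"
    then have "is_vertex S X" "X \<in> S"
      by (simp_all add: vertices_def is_vertex_def)
    then have X: "psd X" "trace X = 1" "Q X"
      using S by auto
    have "X$i$i \<le> 0 \<or> 1 \<le> X$i$i" for i
    proof (rule ccontr)
      assume "\<not> (X$i$i \<le> 0 \<or> 1 \<le> X$i$i)"
      then have "\<not> is_vertex S X"
      proof (intro not_vertex_if_diag_entry_strictly_between[OF X(1,2), of i])
        fix s c assume s: "\<forall>a. 0 < s a" and c: "0 < c"
          and trace: "trace (c *\<^sub>R diag_congruence s X) = 1"
        have "c *\<^sub>R diag_congruence s X = (\<chi> a b. (c * s a * s b) * X$a$b)"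
          by (simp add: diag_congruence_def vec_eq_iff mult_ac)
        then have "Q (c *\<^sub>R diag_congruence s X)"
          using scaling[OF X(3)] s c by simp
        moreover have "psd (c *\<^sub>R diag_congruence s X)"
          using c by (simp add: psd_scaleR psd_diag_congruence X(1))
        ultimately show "c *\<^sub>R diag_congruence s X \<in> S"
          using S trace by simp
      qed simp_all
      with \<open>is_vertex S X\<close> show False
        by contradiction
    qed
    then obtain k where "X = unit_proj k"
      using psd_trace_one_eq_unit_proj[OF X(1,2)] by blast
    with \<open>is_vertex S X\<close> not_vertex show "X \<in> unit_proj ` R"
      by blast
  qed
qed

lemma simple_graph_edge_neq: "simple_graph E \<Longrightarrow> {a, b} \<in> E \<Longrightarrow> a \<noteq> b"
  unfolding simple_graph_def by (metis doubleton_eq_iff insert_absorb2)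

lemma degree_eq_card_minus_one_iff:
  fixes E :: "'v::finite set set"
  assumes "simple_graph E"
  shows "degree E k = CARD('v) - 1 \<longleftrightarrow> (\<forall>j. j \<noteq> k \<longrightarrow> {k, j} \<in> E)"
proof -
  have "{j. {k, j} \<in> E} \<subseteq> UNIV - {k}"
    using simple_graph_edge_neq[OF assms] by blast
  moreover have "card (UNIV - {k}) = CARD('v) - 1"
    by (simp add: card_Diff_singleton)
  ultimately have "degree E k = CARD('v) - 1 \<longleftrightarrow> {j. {k, j} \<in> E} = UNIV - {k}"
    unfolding degree_def by (metis card_subset_eq finite)
  then show ?thesis
    using simple_graph_edge_neq[OF assms, of k k] by auto
qed

lemma unit_proj_eq_0_on_edge:
  "simple_graph E \<Longrightarrow> {a, b} \<in> E \<Longrightarrow> unit_proj k $ a $ b = 0"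
  using simple_graph_edge_neq by (fastforce simp: unit_proj_def)

lemma supported_on_pair_eq_0_on_edge:
  assumes "simple_graph E" "{k, j} \<notin> E" "supported_on_pair k j Y" "{a, b} \<in> E"
  shows "Y$a$b = 0"
proof (rule ccontr)
  assume "Y$a$b \<noteq> 0"
  then have "{a, b} = {k, j}"
    using assms(3) simple_graph_edge_neq[OF assms(1,4)] unfolding supported_on_pair_def by blast
  with assms(2,4) show False
    by simp
qed

lemma vertices_zero_pattern:
  fixes E :: "'v::finite set set"
  assumes E: "simple_graph E"
  shows "vertices {X. psd X \<and> trace X = 1 \<and> (\<forall>i j. {i, j} \<in> E \<longrightarrow> X $ i $ j = 0)}
    = unit_proj ` {k. \<forall>j. j \<noteq> k \<longrightarrow> {k, j} \<in> E}"
  (is "vertices ?S = _")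
proof (rule vertices_eq_unit_proj_image[OF refl])
  fix k :: 'v
  assume "k \<in> {k. \<forall>j. j \<noteq> k \<longrightarrow> {k, j} \<in> E}"
  then show "is_vertex ?S (unit_proj k)"
    by (intro is_vertex_unit_proj[where s = 1])
      (auto simp: psd_unit_proj trace_unit_proj unit_proj_eq_0_on_edge[OF E])
next
  fix k :: 'v
  assume "k \<notin> {k. \<forall>j. j \<noteq> k \<longrightarrow> {k, j} \<in> E}"
  then obtain j where "j \<noteq> k" "{k, j} \<notin> E"
    by auto
  then show "\<not> is_vertex ?S (unit_proj k)"
    by (intro unit_proj_not_vertex_if_pair_feasible) (auto simp: supported_on_pair_eq_0_on_edge[OF E])
qed simp

lemma vertices_nonneg_pattern:
  fixes E :: "'v::finite set set"
  assumes E: "simple_graph E"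
  shows "vertices {X. psd X \<and> trace X = 1 \<and> (\<forall>i j. {i, j} \<in> E \<longrightarrow> X $ i $ j = 0)
                 \<and> (\<forall>i j. i \<noteq> j \<and> {i, j} \<notin> E \<longrightarrow> 0 \<le> X $ i $ j)}
    = unit_proj ` UNIV"
  (is "vertices ?S = _")
proof (rule vertices_eq_unit_proj_image[OF refl])
  fix k :: 'v
  have "0 \<le> Y$k$j" if "Y \<in> ?S" "j \<noteq> k" for Y j
    using that by (cases "{k, j} \<in> E") auto
  then show "is_vertex ?S (unit_proj k)"
    by (intro is_vertex_unit_proj[where s = "-1"])
      (auto simp: psd_unit_proj trace_unit_proj unit_proj_eq_0_on_edge[OF E] unit_proj_nonneg)
qed (auto intro!: mult_nonneg_nonneg simp: less_imp_le)

lemma vertices_nonpos_pattern: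
  fixes E :: "'v::finite set set"
  assumes E: "simple_graph E"
  shows "vertices {X. psd X \<and> trace X = 1 \<and> (\<forall>i j. {i, j} \<in> E \<longrightarrow> X $ i $ j \<le> 0)}
    = unit_proj ` {k. \<forall>j. j \<noteq> k \<longrightarrow> {k, j} \<in> E}"
  (is "vertices ?S = _")
proof (rule vertices_eq_unit_proj_image[OF refl])
  fix k :: 'v
  assume "k \<in> {k. \<forall>j. j \<noteq> k \<longrightarrow> {k, j} \<in> E}"
  then show "is_vertex ?S (unit_proj k)"
    by (intro is_vertex_unit_proj[where s = 1])
      (auto simp: psd_unit_proj trace_unit_proj unit_proj_eq_0_on_edge[OF E])
next
  fix k :: 'v
  assume "k \<notin> {k. \<forall>j. j \<noteq> k \<longrightarrow> {k, j} \<in> E}"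
  then obtain j where "j \<noteq> k" "{k, j} \<notin> E"
    by auto
  then show "\<not> is_vertex ?S (unit_proj k)"
    by (intro unit_proj_not_vertex_if_pair_feasible) (auto simp: supported_on_pair_eq_0_on_edge[OF E])
qed (auto simp: mult_nonneg_nonpos order.strict_implies_order)

theorem corollary3p7:
  fixes E :: "('v::finite) set set"
  assumes "simple_graph E"
  defines "P \<equiv> {k. degree E k = CARD('v) - 1}"
  shows
   "vertices {X. psd X \<and> trace X = 1 \<and> (\<forall>i j. {i, j} \<in> E \<longrightarrow> X $ i $ j = 0)}
      = unit_proj ` P \<and>
    vertices {X. psd X \<and> trace X = 1 \<and> (\<forall>i j. {i, j} \<in> E \<longrightarrow> X $ i $ j = 0)
                 \<and> (\<forall>i j. i \<noteq> j \<and> {i, j} \<notin> E \<longrightarrow> 0 \<le> X $ i $ j)}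
      = unit_proj ` UNIV \<and>
    vertices {X. psd X \<and> trace X = 1 \<and> (\<forall>i j. {i, j} \<in> E \<longrightarrow> X $ i $ j \<le> 0)}
      = unit_proj ` P"
proof -
  have "P = {k. \<forall>j. j \<noteq> k \<longrightarrow> {k, j} \<in> E}"
    using degree_eq_card_minus_one_iff[OF assms(1)] by (simp add: P_def)
  then show ?thesis
    using vertices_zero_pattern[OF assms(1)] vertices_nonneg_pattern[OF assms(1)]
      vertices_nonpos_pattern[OF assms(1)] by simp
qed

end
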